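(* Let $\mathcal{A}\in\mathbb{C}^{I_{1\ldots N}\times I_{1\ldots N}}$ and let $\mathcal{N}\in\mathbb{C}^{I_{1\ldots N}\times I_{1\ldots N}}$ be a Hermitian positive definite tensor. Put $\tilde{\mathcal{A}}=\mathcal{N}^{1/2}*_N\mathcal{A}*_N\mathcal{N}^{-1/2}$. Then: (i) $\mathcal{A}=\mathcal{A}^{\#}_{\mathcal{N}\mathcal{N}}$ if and only if $\tilde{\mathcal{A}}=\tilde{\mathcal{A}}^H$; (ii) $\mathcal{A}*_N\mathcal{A}^{\#}_{\mathcal{N}\mathcal{N}}=\mathcal{A}^{\#}_{\mathcal{N}\mathcal{N}}*_N\mathcal{A}$ if and only if $\tilde{\mathcal{A}}*_N\tilde{\mathcal{A}}^H=\tilde{\mathcal{A}}^H*_N\tilde{\mathcal{A}}$; (iii) $\mathcal{A}^{\dagger}_{\mathcal{N},\mathcal{N}}*_N(\mathcal{A}^{\dagger}_{\mathcal{N},\mathcal{N}})^{\#}_{\mathcal{N}\mathcal{N}}=(\mathcal{A}^{\dagger}_{\mathcal{N},\mathcal{N}})^{\#}_{\mathcal{N}\mathcal{N}}*_N\mathcal{A}^{\dagger}_{\mathcal{N},\mathcal{N}}$ if and only if $\tilde{\mathcal{A}}^{\dagger}*_N(\tilde{\mathcal{A}}^{\dagger})^H=(\tilde{\mathcal{A}}^{\dagger})^H*_N\tilde{\mathcal{A}}^{\dagger}$; (iv) $\mathcal{A}*_N\mathcal{A}^{\#}_{\mathcal{N}\mathcal{N}}=\mathcal{A}^{\#}_{\mathcal{N}\mathcal{N}}*_N\mathcal{A}$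 if and only if $\mathcal{A}^{\dagger}_{\mathcal{N},\mathcal{N}}*_N(\mathcal{A}^{\dagger}_{\mathcal{N},\mathcal{N}})^{\#}_{\mathcal{N}\mathcal{N}}=(\mathcal{A}^{\dagger}_{\mathcal{N},\mathcal{N}})^{\#}_{\mathcal{N}\mathcal{N}}*_N\mathcal{A}^{\dagger}_{\mathcal{N},\mathcal{N}}$.
   Context: Write $I_{1\ldots N}$ for $I_1\times\cdots\times I_N$. Einstein product: $(\mathcal{A}*_N\mathcal{B})_{i_1\ldots i_Mj_1\ldots j_L}=\sum_{k_1,\ldots,k_N}a_{i_1\ldots i_Mk_1\ldots k_N}b_{k_1\ldots k_Nj_1\ldots j_L}$. $\mathcal{A}^H$ is the conjugate transpose (entries $\overline{a_{i_1\ldots i_Nj_1\ldots j_N}}$ at position $(j_1,\ldots,j_N,i_1,\ldots,i_N)$). Identity tensor: entry 1 where the two index blocks coincide, 0 otherwise; inverses are with respect to $*_N$. $\mathcal{N}$ is Hermitian positive definite if $\mathcal{N}^H=\mathcal{N}$ and $\mathcal{X}^H*_N\mathcal{N}*_N\mathcal{X}>0$ for all nonzero $\mathcal{X}\in\mathbb{C}^{I_{1\ldots N}}$; $\mathcal{N}^{1/2}$ is its unique Hermitian positive definite square root ($\mathcal{N}^{1/2}*_N\mathcal{N}^{1/2}=\mathcal{N}$) and $\mathcal{N}^{-1/2}=(\mathcal{N}^{1/2})^{-1}$. Weighted conjugate transpose: $\mathcal{A}^{\#}_{\mathcal{N}\mathcal{N}}=\mathcal{N}^{-1}*_N\mathcal{A}^H*_N\mathcal{N}$.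 Weighted Moore-Penrose inverse $\mathcal{A}^{\dagger}_{\mathcal{M},\mathcal{N}}$ (for Hermitian positive definite $\mathcal{M},\mathcal{N}$): the unique $\mathcal{X}$ with $\mathcal{A}*_N\mathcal{X}*_N\mathcal{A}=\mathcal{A}$, $\mathcal{X}*_N\mathcal{A}*_N\mathcal{X}=\mathcal{X}$, $(\mathcal{M}*_N\mathcal{A}*_N\mathcal{X})^H=\mathcal{M}*_N\mathcal{A}*_N\mathcal{X}$, $(\mathcal{N}*_N\mathcal{X}*_N\mathcal{A})^H=\mathcal{N}*_N\mathcal{X}*_N\mathcal{A}$; $\mathcal{A}^{\dagger}$ (Moore-Penrose inverse) is the case of identity weights. *)

theory Defs
  imports Complex_Main
begin

text \<open>Dimensions I_1,...,I_N are given by the list dims (N = length dims).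
 A tensor in C^{I_{1..N} x I_{1..N}} is a function A :: nat list => nat list => complex,
 A is js = a_{i_1..i_N j_1..j_N}, required to vanish outside the index set.\<close>

definition midx :: "nat list \<Rightarrow> nat list set" where
  "midx dims = {is. length is = length dims \<and> (\<forall>k<length dims. is ! k < dims ! k)}"

type_synonym tensor = "nat list \<Rightarrow> nat list \<Rightarrow> complex"

definition tensors :: "nat list \<Rightarrow> tensor set" where
  "tensors dims = {A. \<forall>is js. (is \<notin> midx dims \<or> js \<notin> midx dims) \<longrightarrow> A is js = 0}"

definition einstein :: "nat list \<Rightarrow> tensor \<Rightarrow> tensor \<Rightarrow> tensor" where
  "einstein dims A B = (\<lambda>is js. if is \<in> midx dims \<and> js \<in> midx dims
      then (\<Sum>ks\<in>midx dims. A is ks * B ks js) else 0)"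

definition ctrans :: "nat list \<Rightarrow> tensor \<Rightarrow> tensor" where
  "ctrans dims A = (\<lambda>is js. if is \<in> midx dims \<and> js \<in> midx dims then cnj (A js is) else 0)"

definition ident :: "nat list \<Rightarrow> tensor" where
  "ident dims = (\<lambda>is js. if is \<in> midx dims \<and> js \<in> midx dims \<and> is = js then 1 else 0)"

definition tinv :: "nat list \<Rightarrow> tensor \<Rightarrow> tensor" where
  "tinv dims A = (THE X. X \<in> tensors dims \<and> einstein dims A X = ident dims
                     \<and> einstein dims X A = ident dims)"

definition hpd :: "nat list \<Rightarrow> tensor \<Rightarrow> bool" where
  "hpd dims N \<longleftrightarrow> N \<in> tensors dims \<and> ctrans dims N = N \<and>
     (\<forall>X :: nat list \<Rightarrow> complex. (\<exists>is\<in>midx dims. X is \<noteq> 0) \<longrightarrow>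
        (let q = (\<Sum>is\<in>midx dims. \<Sum>js\<in>midx dims. cnj (X is) * N is js * X js)
         in Im q = 0 \<and> Re q > 0))"

definition tsqrt :: "nat list \<Rightarrow> tensor \<Rightarrow> tensor" where
  "tsqrt dims N = (THE S. hpd dims S \<and> einstein dims S S = N)"

definition tsqrt_inv :: "nat list \<Rightarrow> tensor \<Rightarrow> tensor" where
  "tsqrt_inv dims N = tinv dims (tsqrt dims N)"

definition wctrans :: "nat list \<Rightarrow> tensor \<Rightarrow> tensor \<Rightarrow> tensor" where
  "wctrans dims N A = einstein dims (einstein dims (tinv dims N) (ctrans dims A)) N"

definition wmp :: "nat list \<Rightarrow> tensor \<Rightarrow> tensor \<Rightarrow> tensor \<Rightarrow> tensor" where
  "wmp dims M N A = (THE X. X \<in> tensors dims \<and>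
      einstein dims (einstein dims A X) A = A \<and>
      einstein dims (einstein dims X A) X = X \<and>
      ctrans dims (einstein dims M (einstein dims A X)) = einstein dims M (einstein dims A X) \<and>
      ctrans dims (einstein dims N (einstein dims X A)) = einstein dims N (einstein dims X A))"

definition mp :: "nat list \<Rightarrow> tensor \<Rightarrow> tensor" where
  "mp dims A = wmp dims (ident dims) (ident dims) A"

end

theory Submission
  imports
    Defs
    "HOL-Library.Function_Algebras"
    "HOL-Computational_Algebra.Fundamental_Theorem_Algebra"
begin

text \<open>
  Let S be the Hermitian positive definite square root of N. Since S is Hermitian, conjugation
  Y \<mapsto> S Y S^-1 maps the weighted conjugate transpose S^-1 S^-1 A^H S S of A to
  (S A S^-1)^H, and it carries the four N,N-weighted Penrose equations onto the unweighted ones,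
  so it maps the weighted Moore-Penrose inverse of A to the Moore-Penrose inverse of S A S^-1.
  Being an algebra automorphism, it therefore turns (i)-(iii) into tautologies. Part (iv) then
  reduces to the fact that a tensor is normal iff its Moore-Penrose inverse is, which follows
  from A^+ = (A^H A)^+ A^H and (A^+)^+ = A.

  Square roots and Moore-Penrose inverses are defined by THE, so their existence (and the
  uniqueness of the square root) has to be proved. Both come from a polynomial functional calculus:
  the spectrum of a Hermitian tensor H is finite and real, and H is annihilated by the product of
  the linear factors X - r over its spectrum. Hence f(H) := p(H) is well defined for every
  polynomial p interpolating f on the spectrum, and f \<mapsto> f(H) is multiplicative. Then
  N^(1/2) = f(N) for f(r) = sqrt r, and (A^H A)^+ = f(A^H A) for f(r) = 1/r, using 1/0 = 0.
\<close>

section \<open>Polynomial interpolation\<close>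

definition roots_poly :: "complex set \<Rightarrow> complex poly" where
  "roots_poly R = (\<Prod>r\<in>R. [:-r, 1:])"

lemma poly_roots_poly: "poly (roots_poly R) x = (\<Prod>r\<in>R. x - r)"
  by (simp add: roots_poly_def poly_prod)

lemma roots_poly_dvd:
  "finite R \<Longrightarrow> (\<And>r. r \<in> R \<Longrightarrow> poly p r = 0) \<Longrightarrow> roots_poly R dvd p"
proof (induct R arbitrary: p rule: finite_induct)
  case empty
  then show ?case by (simp add: roots_poly_def)
next
  case (insert a R)
  obtain q where q: "p = [:-a, 1:] * q"
    using insert.prems poly_eq_0_iff_dvd by (metis dvdE insertI1)
  have "poly q r = 0" if "r \<in> R" for r
    using insert.prems[of r] that insert.hyps(2) q by auto
  then have "roots_poly R dvd q"
    by (rule insert.hyps(3))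
  moreover have "roots_poly (insert a R) = [:-a, 1:] * roots_poly R"
    using insert.hyps(1,2) by (simp add: roots_poly_def)
  ultimately show ?case
    unfolding q by (metis dvd_refl mult_dvd_mono)
qed

lemma poly_interpolation: "finite (R :: complex set) \<Longrightarrow> \<exists>p. \<forall>r\<in>R. poly p r = f r"
proof (induct R rule: finite_induct)
  case empty
  then show ?case by simp
next
  case (insert a R)
  then obtain p where p: "\<forall>r\<in>R. poly p r = f r"
    by blast
  have "poly (roots_poly R) a \<noteq> 0" and "\<forall>r\<in>R. poly (roots_poly R) r = 0"
    using insert.hyps by (auto simp: poly_roots_poly)
  then have "\<forall>r\<in>insert a R.
      poly (p + smult ((f a - poly p a) / poly (roots_poly R) a) (roots_poly R)) r = f r"
    using p by auto
  then show ?case by blast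
qed

section \<open>The tensor algebra\<close>

text \<open>As simplification rules these would unfold tensor equations into pointwise \<lambda>-terms,
  so they are only used explicitly, via \<open>tensor_apply\<close>.\<close>
declare plus_fun_apply [simp del] zero_fun_apply [simp del] minus_apply [simp del]

definition tscale :: "complex \<Rightarrow> tensor \<Rightarrow> tensor" where
  "tscale c A = (\<lambda>i j. c * A i j)"

lemma tscale_apply: "tscale c A i j = c * A i j"
  by (simp add: tscale_def)

lemmas tensor_apply = plus_fun_apply zero_fun_apply minus_apply tscale_apply

interpretation tensor: vector_space tscale
  by unfold_locales (auto simp: tensor_apply fun_eq_iff algebra_simps)

lemma sum_tensor_apply: "(\<Sum>x\<in>S. f x) i j = (\<Sum>x\<in>S. (f x :: tensor) i j)"
  by (induct S rule: infinite_finite_induct) (auto simp: tensor_apply)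

lemma midx_Cons: "midx (n # dims) = (\<lambda>(i, is). i # is) ` ({..<n} \<times> midx dims)"
proof -
  have "xs \<in> midx (n # dims) \<longleftrightarrow> (\<exists>i is. xs = i # is \<and> i < n \<and> is \<in> midx dims)" for xs
    by (cases xs) (auto simp: midx_def nth_Cons split: nat.splits)
  then show ?thesis by (auto simp: image_iff)
qed

lemma finite_midx [simp]: "finite (midx dims)"
proof (induct dims)
  case Nil
  have "midx [] = {[]}"
    by (auto simp: midx_def)
  then show ?case by simp
qed (simp add: midx_Cons)

context
  fixes d :: "nat list"
begin

abbreviation idxs :: "nat list set" where "idxs \<equiv> midx d"
abbreviation tens :: "tensor set" where "tens \<equiv> tensors d"
abbreviation emult :: "tensor \<Rightarrow> tensor \<Rightarrow> tensor" (infixl "\<odot>" 70) where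
  "A \<odot> B \<equiv> einstein d A B"
abbreviation tid :: tensor ("\<I>") where "\<I> \<equiv> ident d"
abbreviation hconj :: "tensor \<Rightarrow> tensor" ("_\<^sup>H" [1000] 1000) where "A\<^sup>H \<equiv> ctrans d A"

lemma tensorsI: "(\<And>i j. i \<notin> idxs \<or> j \<notin> idxs \<Longrightarrow> A i j = 0) \<Longrightarrow> A \<in> tens"
  by (auto simp: tensors_def)

lemma tensorsD: "A \<in> tens \<Longrightarrow> i \<notin> idxs \<or> j \<notin> idxs \<Longrightarrow> A i j = 0"
  by (auto simp: tensors_def)

lemma tensor_eqI:
  "A \<in> tens \<Longrightarrow> B \<in> tens \<Longrightarrow> (\<And>i j. i \<in> idxs \<Longrightarrow> j \<in> idxs \<Longrightarrow> A i j = B i j) \<Longrightarrow> A = B"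
  by (rule ext, rule ext) (metis tensorsD)

lemma einstein_in_tensors [simp]: "A \<odot> B \<in> tens"
  by (rule tensorsI) (auto simp: einstein_def)

lemma ctrans_in_tensors [simp]: "A\<^sup>H \<in> tens"
  by (rule tensorsI) (auto simp: ctrans_def)

lemma ident_in_tensors [simp]: "\<I> \<in> tens"
  by (rule tensorsI) (auto simp: ident_def)

lemma zero_in_tensors [simp]: "0 \<in> tens"
  by (rule tensorsI) (auto simp: tensor_apply)

lemma add_in_tensors [simp]: "A \<in> tens \<Longrightarrow> B \<in> tens \<Longrightarrow> A + B \<in> tens"
  by (rule tensorsI) (auto simp: tensor_apply tensorsD)

lemma diff_in_tensors [simp]: "A \<in> tens \<Longrightarrow> B \<in> tens \<Longrightarrow> A - B \<in> tens"
  by (rule tensorsI) (auto simp: tensor_apply tensorsD)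

lemma tscale_in_tensors [simp]: "A \<in> tens \<Longrightarrow> tscale c A \<in> tens"
  by (rule tensorsI) (auto simp: tensor_apply tensorsD)

lemma hermitian_in_tensors: "A\<^sup>H = A \<Longrightarrow> A \<in> tens"
  by (metis ctrans_in_tensors)

lemma einstein_apply: "i \<in> idxs \<Longrightarrow> j \<in> idxs \<Longrightarrow> (A \<odot> B) i j = (\<Sum>k\<in>idxs. A i k * B k j)"
  by (simp add: einstein_def)

lemma ctrans_apply: "i \<in> idxs \<Longrightarrow> j \<in> idxs \<Longrightarrow> A\<^sup>H i j = cnj (A j i)"
  by (simp add: ctrans_def)

lemma einstein_assoc: "A \<odot> B \<odot> C = A \<odot> (B \<odot> C)"
proof (rule tensor_eqI[OF einstein_in_tensors einstein_in_tensors])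
  fix i j assume "i \<in> idxs" "j \<in> idxs"
  then have "(A \<odot> B \<odot> C) i j = (\<Sum>k\<in>idxs. \<Sum>l\<in>idxs. A i l * B l k * C k j)"
    by (simp add: einstein_apply sum_distrib_right)
  also have "\<dots> = (\<Sum>l\<in>idxs. \<Sum>k\<in>idxs. A i l * B l k * C k j)"
    by (rule sum.swap)
  also have "\<dots> = (A \<odot> (B \<odot> C)) i j"
    using \<open>i \<in> idxs\<close> \<open>j \<in> idxs\<close> by (simp add: einstein_apply sum_distrib_left mult.assoc)
  finally show "(A \<odot> B \<odot> C) i j = (A \<odot> (B \<odot> C)) i j" .
qed

lemma einstein_ident_left [simp]: "A \<in> tens \<Longrightarrow> \<I> \<odot> A = A"
proof (rule tensor_eqI[OF einstein_in_tensors])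
  fix i j assume ij: "i \<in> idxs" "j \<in> idxs"
  then have "(\<I> \<odot> A) i j = (\<Sum>k\<in>idxs. if i = k then A k j else 0)"
    unfolding einstein_apply[OF ij] by (intro sum.cong) (auto simp: ident_def)
  then show "(\<I> \<odot> A) i j = A i j"
    using ij by simp
qed

lemma einstein_ident_right [simp]: "A \<in> tens \<Longrightarrow> A \<odot> \<I> = A"
proof (rule tensor_eqI[OF einstein_in_tensors])
  fix i j assume ij: "i \<in> idxs" "j \<in> idxs"
  then have "(A \<odot> \<I>) i j = (\<Sum>k\<in>idxs. if k = j then A i k else 0)"
    unfolding einstein_apply[OF ij] by (intro sum.cong) (auto simp: ident_def)
  then show "(A \<odot> \<I>) i j = A i j"
    using ij by simp
qed

lemma ctrans_ctrans [simp]: "A \<in> tens \<Longrightarrow> A\<^sup>H\<^sup>H = A"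
  by (rule tensor_eqI) (auto simp: ctrans_apply)

lemma ctrans_einstein: "(A \<odot> B)\<^sup>H = B\<^sup>H \<odot> A\<^sup>H"
  by (rule tensor_eqI) (auto simp: ctrans_apply einstein_apply mult.commute)

lemma ctrans_ident [simp]: "\<I>\<^sup>H = \<I>"
  by (rule tensor_eqI[OF ctrans_in_tensors ident_in_tensors]) (auto simp: ctrans_apply ident_def)

lemma ctrans_add: "(A + B)\<^sup>H = A\<^sup>H + B\<^sup>H"
  by (simp add: tensor_apply ctrans_def fun_eq_iff)

lemma ctrans_diff: "(A - B)\<^sup>H = A\<^sup>H - B\<^sup>H"
  by (simp add: tensor_apply ctrans_def fun_eq_iff)

lemma ctrans_tscale: "(tscale c A)\<^sup>H = tscale (cnj c) (A\<^sup>H)"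
  by (simp add: tensor_apply ctrans_def fun_eq_iff)

lemma ctrans_zero [simp]: "0\<^sup>H = 0"
  by (simp add: ctrans_def fun_eq_iff zero_fun_apply)

lemma einstein_add_left: "(A + B) \<odot> C = A \<odot> C + B \<odot> C"
  by (simp add: tensor_apply einstein_def fun_eq_iff sum.distrib distrib_right)

lemma einstein_add_right: "C \<odot> (A + B) = C \<odot> A + C \<odot> B"
  by (simp add: tensor_apply einstein_def fun_eq_iff sum.distrib distrib_left)

lemma einstein_diff_left: "(A - B) \<odot> C = A \<odot> C - B \<odot> C"
  by (simp add: tensor_apply einstein_def fun_eq_iff sum_subtractf left_diff_distrib)

lemma einstein_diff_right: "C \<odot> (A - B) = C \<odot> A - C \<odot> B"
  by (simp add: tensor_apply einstein_def fun_eq_iff sum_subtractf right_diff_distrib)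

lemma einstein_tscale_left: "tscale c A \<odot> B = tscale c (A \<odot> B)"
  by (simp add: tensor_apply einstein_def fun_eq_iff sum_distrib_left mult.assoc)

lemma einstein_tscale_right: "B \<odot> tscale c A = tscale c (B \<odot> A)"
  by (simp add: tensor_apply einstein_def fun_eq_iff sum_distrib_left mult.left_commute)

lemma einstein_zero_left [simp]: "0 \<odot> A = 0"
  by (simp add: tensor_apply einstein_def fun_eq_iff)

lemma einstein_zero_right [simp]: "A \<odot> 0 = 0"
  by (simp add: tensor_apply einstein_def fun_eq_iff)

section \<open>Quadratic forms and spectra\<close>

definition qform :: "tensor \<Rightarrow> (nat list \<Rightarrow> complex) \<Rightarrow> complex" where
  "qform H v = (\<Sum>i\<in>idxs. \<Sum>j\<in>idxs. cnj (v i) * H i j * v j)"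

definition sqnorm :: "(nat list \<Rightarrow> complex) \<Rightarrow> real" where
  "sqnorm v = (\<Sum>i\<in>idxs. (cmod (v i))\<^sup>2)"

definition anisotropic :: "tensor \<Rightarrow> bool" where
  "anisotropic H \<longleftrightarrow> (\<forall>v. (\<exists>i\<in>idxs. v i \<noteq> 0) \<longrightarrow> qform H v \<noteq> 0)"

definition strictly_accretive :: "tensor \<Rightarrow> bool" where
  "strictly_accretive H \<longleftrightarrow> (\<forall>v. (\<exists>i\<in>idxs. v i \<noteq> 0) \<longrightarrow> 0 < Re (qform H v))"

definition spectrum :: "tensor \<Rightarrow> complex set" where
  "spectrum H = {r. \<exists>X\<in>tens. X \<noteq> 0 \<and> (H - tscale r \<I>) \<odot> X = 0}"

lemma cnj_mult_self: "cnj z * z = of_real ((cmod z)\<^sup>2)"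
  by (simp only: complex_norm_square mult.commute)

lemma sqnorm_pos:
  assumes "\<exists>i\<in>idxs. v i \<noteq> 0"
  shows "0 < sqnorm v"
proof -
  obtain i where "i \<in> idxs" "v i \<noteq> 0"
    using assms by blast
  then show ?thesis
    unfolding sqnorm_def by (intro sum_pos2[OF finite_midx]) auto
qed

lemma sqnorm_nonneg: "0 \<le> sqnorm v"
  unfolding sqnorm_def by (simp add: sum_nonneg)

lemma qform_ident: "qform \<I> v = of_real (sqnorm v)"
proof -
  have "qform \<I> v = (\<Sum>i\<in>idxs. \<Sum>j\<in>idxs. if i = j then cnj (v i) * v j else 0)"
    unfolding qform_def by (intro sum.cong refl) (auto simp: ident_def)
  also have "\<dots> = (\<Sum>i\<in>idxs. cnj (v i) * v i)"
    by simp
  also have "\<dots> = of_real (sqnorm v)"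
    by (simp add: sqnorm_def cnj_mult_self)
  finally show ?thesis .
qed

lemma qform_add: "qform (A + B) v = qform A v + qform B v"
  by (simp add: tensor_apply qform_def sum.distrib distrib_left distrib_right)

lemma qform_shift: "qform (H - tscale r \<I>) v = qform H v - r * of_real (sqnorm v)"
proof -
  have "qform (H - tscale r \<I>) v = qform H v - r * qform \<I> v"
    by (simp add: tensor_apply qform_def sum_subtractf sum_distrib_left algebra_simps)
  then show ?thesis by (simp add: qform_ident)
qed

lemma anisotropic_einstein_eq_0:
  assumes "anisotropic H" "X \<in> tens" "H \<odot> X = 0"
  shows "X = 0"
proof (rule tensor_eqI[OF assms(2) zero_in_tensors])
  fix i j assume i: "i \<in> idxs" and j: "j \<in> idxs"
  have "qform H (\<lambda>k. X k j) = (\<Sum>l\<in>idxs. cnj (X l j) * (H \<odot> X) l j)"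
    unfolding qform_def using j by (simp add: einstein_apply sum_distrib_left mult.assoc)
  also have "\<dots> = 0"
    using assms(3) by (simp add: zero_fun_apply)
  finally show "X i j = 0 i j"
    using assms(1) i unfolding anisotropic_def by (auto simp: zero_fun_apply)
qed

lemma strictly_accretive_imp_anisotropic: "strictly_accretive H \<Longrightarrow> anisotropic H"
  unfolding strictly_accretive_def anisotropic_def by force

lemma strictly_accretive_add:
  "strictly_accretive A \<Longrightarrow> strictly_accretive B \<Longrightarrow> strictly_accretive (A + B)"
  unfolding strictly_accretive_def by (simp add: qform_add add_pos_pos)

lemma hpd_iff: "hpd d H \<longleftrightarrow> H\<^sup>H = H \<and>
    (\<forall>v. (\<exists>i\<in>idxs. v i \<noteq> 0) \<longrightarrow> Im (qform H v) = 0 \<and> 0 < Re (qform H v))"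
  unfolding hpd_def qform_def Let_def using hermitian_in_tensors by blast

lemma hpd_imp_hermitian: "hpd d H \<Longrightarrow> H\<^sup>H = H"
  by (simp add: hpd_iff)

lemma hpd_imp_strictly_accretive: "hpd d H \<Longrightarrow> strictly_accretive H"
  by (simp add: hpd_iff strictly_accretive_def)

lemma qform_hermitian_real:
  assumes "H\<^sup>H = H"
  shows "Im (qform H v) = 0"
proof -
  have H: "cnj (H i j) = H j i" if "i \<in> idxs" "j \<in> idxs" for i j
    using ctrans_apply[OF that(2,1), of H] assms by simp
  have "cnj (qform H v) = (\<Sum>i\<in>idxs. \<Sum>j\<in>idxs. v i * H j i * cnj (v j))"
    unfolding qform_def by (simp add: H)
  also have "\<dots> = qform H v"
    unfolding qform_def by (subst sum.swap) (simp add: mult_ac)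
  finally show ?thesis
    by (metis Reals_cnj_iff complex_is_Real_iff)
qed

lemma anisotropic_notin_spectrum: "anisotropic (H - tscale r \<I>) \<Longrightarrow> r \<notin> spectrum H"
  unfolding spectrum_def using anisotropic_einstein_eq_0 by blast

lemma spectrum_real:
  assumes "H\<^sup>H = H" "r \<in> spectrum H"
  shows "Im r = 0"
proof (rule ccontr)
  assume "Im r \<noteq> 0"
  have "anisotropic (H - tscale r \<I>)"
    unfolding anisotropic_def
  proof (intro allI impI)
    fix v :: "nat list \<Rightarrow> complex" assume "\<exists>i\<in>idxs. v i \<noteq> 0"
    then have "0 < sqnorm v"
      by (rule sqnorm_pos)
    then have "Im (qform (H - tscale r \<I>) v) \<noteq> 0"
      using \<open>Im r \<noteq> 0\<close> by (simp add: qform_shift qform_hermitian_real[OF assms(1)])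
    then show "qform (H - tscale r \<I>) v \<noteq> 0"
      by auto
  qed
  then show False
    using assms(2) anisotropic_notin_spectrum by blast
qed

lemma spectrum_Re_pos:
  assumes "strictly_accretive H" "r \<in> spectrum H"
  shows "0 < Re r"
proof (rule ccontr)
  assume "\<not> 0 < Re r"
  have "anisotropic (H - tscale r \<I>)"
    unfolding anisotropic_def
  proof (intro allI impI)
    fix v :: "nat list \<Rightarrow> complex" assume "\<exists>i\<in>idxs. v i \<noteq> 0"
    then have "0 < Re (qform H v)"
      using assms(1) unfolding strictly_accretive_def by blast
    moreover have "Re r * sqnorm v \<le> 0"
      using \<open>\<not> 0 < Re r\<close> sqnorm_nonneg[of v] by (simp add: mult_nonpos_nonneg)
    moreover have "Re (qform (H - tscale r \<I>) v) = Re (qform H v) - Re r * sqnorm v"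
      by (simp add: qform_shift)
    ultimately show "qform (H - tscale r \<I>) v \<noteq> 0"
      by auto
  qed
  then show False
    using assms(2) anisotropic_notin_spectrum by blast
qed

lemma ctrans_einstein_self_eq_0:
  assumes "M \<in> tens" "M\<^sup>H \<odot> M = 0"
  shows "M = 0"
proof (rule tensor_eqI[OF assms(1) zero_in_tensors])
  fix i j assume i: "i \<in> idxs" and j: "j \<in> idxs"
  have "(M\<^sup>H \<odot> M) j j = of_real (\<Sum>k\<in>idxs. (cmod (M k j))\<^sup>2)"
    using j by (simp add: einstein_apply ctrans_apply cnj_mult_self)
  then have "(\<Sum>k\<in>idxs. (cmod (M k j))\<^sup>2) = 0"
    using assms(2) by (simp add: zero_fun_apply del: of_real_sum)
  then show "M i j = 0 i j"
    using i by (simp add: tensor_apply sum_nonneg_eq_0_iff)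
qed

lemma hermitian_square_kernel:
  assumes "K\<^sup>H = K" "K \<odot> (K \<odot> Y) = 0"
  shows "K \<odot> Y = 0"
proof (rule ctrans_einstein_self_eq_0)
  have "(K \<odot> Y)\<^sup>H \<odot> (K \<odot> Y) = Y\<^sup>H \<odot> (K \<odot> (K \<odot> Y))"
    by (simp add: ctrans_einstein assms(1) einstein_assoc)
  then show "(K \<odot> Y)\<^sup>H \<odot> (K \<odot> Y) = 0"
    using assms(2) by simp
qed simp

section \<open>Polynomial functional calculus\<close>

definition tpoly :: "complex poly \<Rightarrow> tensor \<Rightarrow> tensor" where
  "tpoly p H = fold_coeffs (\<lambda>a M. tscale a \<I> + H \<odot> M) p 0"

lemma tpoly_0 [simp]: "tpoly 0 H = 0"
  by (simp add: tpoly_def)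

lemma tpoly_pCons: "tpoly (pCons a p) H = tscale a \<I> + H \<odot> tpoly p H"
  by (cases "p = 0 \<and> a = 0") (auto simp: tpoly_def)

lemma tpoly_in_tensors [simp]: "tpoly p H \<in> tens"
  by (induct p)
    (simp_all only: tpoly_0 tpoly_pCons zero_in_tensors add_in_tensors tscale_in_tensors
      ident_in_tensors einstein_in_tensors)

lemma tpoly_add: "tpoly (p + q) H = tpoly p H + tpoly q H"
proof (induct p arbitrary: q rule: pCons_induct)
  case (pCons a p)
  then show ?case
    by (cases q rule: pCons_cases)
      (simp add: tpoly_pCons einstein_add_right tensor.scale_left_distrib algebra_simps)
qed simp

lemma tpoly_smult: "tpoly (smult c p) H = tscale c (tpoly p H)"
  by (induct p) (simp_all add: tpoly_pCons einstein_tscale_right tensor.scale_right_distrib)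

lemma tpoly_diff: "tpoly (p - q) H = tpoly p H - tpoly q H"
  by (metis add_diff_cancel_right' diff_add_cancel tpoly_add)

lemma tpoly_sum: "tpoly (\<Sum>x\<in>S. f x) H = (\<Sum>x\<in>S. tpoly (f x) H)"
  by (induct S rule: infinite_finite_induct) (simp_all add: tpoly_add)

lemma tpoly_mult: "H \<in> tens \<Longrightarrow> tpoly (p * q) H = tpoly p H \<odot> tpoly q H"
  by (induct p)
    (simp_all add: tpoly_pCons tpoly_add tpoly_smult einstein_add_left einstein_tscale_left
      einstein_assoc)

lemma tpoly_1 [simp]: "tpoly 1 H = \<I>"
  by (simp add: one_pCons tpoly_pCons)

lemma tpoly_linear: "H \<in> tens \<Longrightarrow> tpoly [:-r, 1:] H = H - tscale r \<I>"
  by (simp add: tpoly_pCons fun_eq_iff)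

lemma tpoly_X: "H \<in> tens \<Longrightarrow> tpoly [:0, 1:] H = H"
  using tpoly_linear[of H 0] by (simp add: fun_eq_iff)

lemma tpoly_commute:
  assumes "X \<in> tens" "X \<odot> H = H \<odot> X"
  shows "X \<odot> tpoly p H = tpoly p H \<odot> X"
proof (induct p)
  case (pCons a p)
  have "X \<odot> (H \<odot> tpoly p H) = H \<odot> X \<odot> tpoly p H"
    by (simp only: assms(2) flip: einstein_assoc)
  also have "\<dots> = H \<odot> tpoly p H \<odot> X"
    by (simp only: einstein_assoc pCons.hyps(2))
  finally have "X \<odot> (H \<odot> tpoly p H) = H \<odot> tpoly p H \<odot> X" .
  then show ?case
    using assms(1)
    by (simp add: tpoly_pCons einstein_add_left einstein_add_right einstein_tscale_left
      einstein_tscale_right)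
qed simp

lemma tpoly_ctrans:
  assumes "H\<^sup>H = H"
  shows "(tpoly p H)\<^sup>H = tpoly (map_poly cnj p) H"
proof (induct p)
  case (pCons a p)
  have "H \<in> tens"
    using assms by (rule hermitian_in_tensors)
  have "(tpoly (pCons a p) H)\<^sup>H = tscale (cnj a) \<I> + tpoly (map_poly cnj p) H \<odot> H"
    by (simp only: tpoly_pCons ctrans_add ctrans_tscale ctrans_einstein ctrans_ident assms
      pCons.hyps(2))
  also have "\<dots> = tscale (cnj a) \<I> + H \<odot> tpoly (map_poly cnj p) H"
    by (simp only: tpoly_commute[OF \<open>H \<in> tens\<close> refl])
  also have "\<dots> = tpoly (map_poly cnj (pCons a p)) H"
    by (simp add: map_poly_pCons tpoly_pCons)
  finally show ?case .
qed simp

lemma tpoly_eigenvector: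
  assumes "H \<odot> X = tscale r X" "X \<in> tens"
  shows "tpoly p H \<odot> X = tscale (poly p r) X"
  by (induct p)
    (simp_all add: tpoly_pCons einstein_add_left einstein_tscale_left einstein_assoc assms
      einstein_tscale_right tensor.scale_left_distrib)

lemma tpoly_mult_commute:
  assumes "H \<in> tens"
  shows "tpoly p H \<odot> tpoly q H = tpoly q H \<odot> tpoly p H"
  using tpoly_mult[OF assms, of p q] tpoly_mult[OF assms, of q p] by (simp add: mult.commute)

lemma tensors_finite_span:
  "\<exists>E. finite E \<and> card E \<le> card idxs * card idxs \<and> tens \<subseteq> tensor.span E"
proof (intro exI conjI subsetI)
  define unit where "unit = (\<lambda>(a, b). (\<lambda>i j. if i = a \<and> j = b then 1 else 0) :: tensor)"
  show "finite (unit ` (idxs \<times> idxs))"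
    by simp
  show "card (unit ` (idxs \<times> idxs)) \<le> card idxs * card idxs"
    using card_image_le[of "idxs \<times> idxs" unit] by (simp add: card_cartesian_product)
  fix A assume "A \<in> tens"
  have "A = (\<Sum>x\<in>idxs \<times> idxs. tscale (case_prod A x) (unit x))"
  proof (intro ext)
    fix i j
    have "(\<Sum>x\<in>idxs \<times> idxs. tscale (case_prod A x) (unit x)) i j
        = (\<Sum>x\<in>idxs \<times> idxs. if x = (i, j) then A i j else 0)"
      unfolding sum_tensor_apply
      by (intro sum.cong refl) (auto simp: unit_def tscale_apply split: if_split_asm)
    also have "\<dots> = A i j"
      using \<open>A \<in> tens\<close> by (auto simp: tensorsD)
    finally show "A i j = (\<Sum>x\<in>idxs \<times> idxs. tscale (case_prod A x) (unit x)) i j" ..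
  qed
  also have "\<dots> \<in> tensor.span (unit ` (idxs \<times> idxs))"
  proof (rule tensor.span_sum)
    fix x assume "x \<in> idxs \<times> idxs"
    then show "tscale (case_prod A x) (unit x) \<in> tensor.span (unit ` (idxs \<times> idxs))"
      by (intro tensor.span_scale tensor.span_base imageI)
  qed
  finally show "A \<in> tensor.span (unit ` (idxs \<times> idxs))" .
qed

lemma tensors_dependent:
  assumes "F \<subseteq> tens" "finite F" "card idxs * card idxs < card F"
  shows "tensor.dependent F"
proof (rule ccontr)
  assume "tensor.independent F"
  obtain E where E: "finite E" "card E \<le> card idxs * card idxs" "tens \<subseteq> tensor.span E"
    using tensors_finite_span by blast
  then have "card F \<le> card E"
    using tensor.independent_span_bound[OF E(1) \<open>tensor.independent F\<close>] assms(1) by blast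
  then show False
    using E(2) assms(3) by simp
qed

lemma tpoly_annihilator_exists: "\<exists>p. p \<noteq> 0 \<and> tpoly p H = 0"
proof -
  define n where "n = card idxs * card idxs"
  define pw where "pw k = tpoly (monom 1 k) H" for k
  show ?thesis
  proof (cases "inj_on pw {0..n}")
    case False
    then obtain i j where "i \<noteq> j" "pw i = pw j"
      unfolding inj_on_def by blast
    then have "monom 1 i - monom 1 j \<noteq> (0 :: complex poly)"
      and "tpoly (monom 1 i - monom 1 j) H = 0"
      by (auto simp: pw_def tpoly_diff dest: arg_cong[where f = "\<lambda>p. coeff p i"])
    then show ?thesis
      by blast
  next
    case True
    have "tensor.dependent (pw ` {0..n})"
    proof (rule tensors_dependent)
      show "pw ` {0..n} \<subseteq> tens"
        by (auto simp: pw_def)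
      show "card idxs * card idxs < card (pw ` {0..n})"
        using card_image[OF True] by (simp add: n_def)
    qed simp
    then obtain u where u: "\<exists>v\<in>pw ` {0..n}. u v \<noteq> 0" "(\<Sum>v\<in>pw ` {0..n}. tscale (u v) v) = 0"
      unfolding tensor.dependent_finite[OF finite_imageI[OF finite_atLeastAtMost]] by blast
    define p where "p = (\<Sum>k\<in>{0..n}. monom (u (pw k)) k)"
    have "tpoly (monom c k) H = tscale c (pw k)" for c k
      using tpoly_smult[of c "monom 1 k" H] by (simp add: pw_def smult_monom)
    then have "tpoly p H = (\<Sum>k\<in>{0..n}. tscale (u (pw k)) (pw k))"
      by (simp add: p_def tpoly_sum)
    also have "\<dots> = 0"
      using u(2) sum.reindex[OF True, of "\<lambda>v. tscale (u v) v"] by simp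
    finally have "tpoly p H = 0" .
    moreover obtain k where "k \<in> {0..n}" "u (pw k) \<noteq> 0"
      using u(1) by blast
    then have "coeff p k \<noteq> 0"
      by (simp add: p_def coeff_sum coeff_monom)
    then have "p \<noteq> 0"
      by auto
    ultimately show ?thesis
      by blast
  qed
qed

lemma spectrum_subset_roots:
  assumes "tpoly p H = 0" "r \<in> spectrum H"
  shows "poly p r = 0"
proof -
  obtain X where X: "X \<in> tens" "X \<noteq> 0" "(H - tscale r \<I>) \<odot> X = 0"
    using assms(2) unfolding spectrum_def by blast
  then have "H \<odot> X = tscale r X"
    by (simp add: einstein_diff_left einstein_tscale_left)
  then have "tpoly p H \<odot> X = tscale (poly p r) X"
    by (rule tpoly_eigenvector[OF _ X(1)])
  then have "tscale (poly p r) X = 0"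
    using assms(1) by simp
  then show ?thesis
    using X(2) by simp
qed

lemma finite_spectrum: "finite (spectrum H)"
proof -
  obtain p where p: "p \<noteq> 0" "tpoly p H = 0"
    using tpoly_annihilator_exists by blast
  have "spectrum H \<subseteq> {r. poly p r = 0}"
    using spectrum_subset_roots[OF p(2)] by blast
  then show ?thesis
    using poly_roots_finite[OF p(1)] by (rule finite_subset)
qed

lemma hermitian_linear_factor:
  assumes "H\<^sup>H = H" "r \<in> spectrum H"
  shows "(H - tscale r \<I>)\<^sup>H = H - tscale r \<I>"
proof -
  have "cnj r = r"
    using spectrum_real[OF assms] by (simp add: complex_eq_iff)
  then show ?thesis
    using assms(1) by (simp add: ctrans_diff ctrans_tscale)
qed

lemma tpoly_linear_power_kernel:
  assumes "H\<^sup>H = H" "r \<in> spectrum H" "Y \<in> tens" "tpoly ([:-r, 1:] ^ n) H \<odot> Y = 0"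
  shows "(H - tscale r \<I>) \<odot> Y = 0"
  using assms(3,4)
proof (induct n arbitrary: Y)
  case (Suc n)
  have H: "H \<in> tens"
    using assms(1) by (rule hermitian_in_tensors)
  have "tpoly ([:-r, 1:] ^ n) H \<odot> ((H - tscale r \<I>) \<odot> Y) = tpoly ([:-r, 1:] ^ Suc n) H \<odot> Y"
    by (simp only: power_Suc2 tpoly_mult[OF H] tpoly_linear[OF H] einstein_assoc)
  also have "\<dots> = 0"
    by (rule Suc.prems(2))
  finally have "tpoly ([:-r, 1:] ^ n) H \<odot> ((H - tscale r \<I>) \<odot> Y) = 0" .
  then have "(H - tscale r \<I>) \<odot> ((H - tscale r \<I>) \<odot> Y) = 0"
    by (rule Suc.hyps[OF einstein_in_tensors])
  then show ?case
    by (rule hermitian_square_kernel[OF hermitian_linear_factor[OF assms(1,2)]])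
qed simp

lemma tpoly_linear_power_injective:
  assumes "H \<in> tens" "r \<notin> spectrum H" "Y \<in> tens" "tpoly ([:-r, 1:] ^ n) H \<odot> Y = 0"
  shows "Y = 0"
  using assms(3,4)
proof (induct n arbitrary: Y)
  case (Suc n)
  have "(H - tscale r \<I>) \<odot> (tpoly ([:-r, 1:] ^ n) H \<odot> Y) = tpoly ([:-r, 1:] ^ Suc n) H \<odot> Y"
    by (simp only: power_Suc tpoly_mult[OF assms(1)] tpoly_linear[OF assms(1)] einstein_assoc)
  also have "\<dots> = 0"
    by (rule Suc.prems(2))
  finally have "(H - tscale r \<I>) \<odot> (tpoly ([:-r, 1:] ^ n) H \<odot> Y) = 0" .
  then have "tpoly ([:-r, 1:] ^ n) H \<odot> Y = 0"
    using assms(2) einstein_in_tensors unfolding spectrum_def by blast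
  then show ?case
    by (rule Suc.hyps[OF Suc.prems(1)])
qed simp

text \<open>Linear factors at points outside the spectrum act injectively and drop out; at an
  eigenvalue a, since H is Hermitian, (H - a)^m has the same kernel as H - a.\<close>
lemma tpoly_annihilator_reduce:
  assumes "H\<^sup>H = H" "finite R" "X \<in> tens" "tpoly (\<Prod>r\<in>R. [:-r, 1:] ^ m r) H \<odot> X = 0"
  shows "tpoly (roots_poly (R \<inter> spectrum H)) H \<odot> X = 0"
  using assms(2-4)
proof (induct R arbitrary: X rule: finite_induct)
  case empty
  then show ?case by (simp add: roots_poly_def)
next
  case (insert a R)
  have H: "H \<in> tens"
    using assms(1) by (rule hermitian_in_tensors)
  define Q where "Q = tpoly ([:-a, 1:] ^ m a) H"
  define P where "P = tpoly (roots_poly (R \<inter> spectrum H)) H"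
  note commute_Q = tpoly_mult_commute[OF H, of "[:-a, 1:] ^ m a"]
  have "tpoly (\<Prod>r\<in>R. [:-r, 1:] ^ m r) H \<odot> (Q \<odot> X)
      = tpoly (\<Prod>r\<in>insert a R. [:-r, 1:] ^ m r) H \<odot> X"
    by (simp only: prod.insert[OF insert.hyps(1,2)] Q_def tpoly_mult[OF H] commute_Q einstein_assoc)
  then have "P \<odot> (Q \<odot> X) = 0"
    unfolding P_def using insert.prems(2) by (intro insert.hyps(3)) simp_all
  moreover have "Q \<odot> (P \<odot> X) = P \<odot> (Q \<odot> X)"
    unfolding P_def Q_def by (simp only: commute_Q flip: einstein_assoc)
  ultimately have PQ: "Q \<odot> (P \<odot> X) = 0"
    by simp
  show ?case
  proof (cases "a \<in> spectrum H")
    case True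
    have "(H - tscale a \<I>) \<odot> (P \<odot> X) = 0"
      using PQ unfolding Q_def
      by (rule tpoly_linear_power_kernel[OF assms(1) True einstein_in_tensors])
    moreover have "insert a R \<inter> spectrum H = insert a (R \<inter> spectrum H)"
      using True by blast
    then have "roots_poly (insert a R \<inter> spectrum H) = [:-a, 1:] * roots_poly (R \<inter> spectrum H)"
      unfolding roots_poly_def by (simp only:) (rule prod.insert, use insert.hyps in auto)
    ultimately show ?thesis
      by (simp only: P_def tpoly_mult[OF H] tpoly_linear[OF H] einstein_assoc)
  next
    case False
    have "P \<odot> X = 0"
      using PQ unfolding Q_def
      by (rule tpoly_linear_power_injective[OF H False einstein_in_tensors])
    moreover have "insert a R \<inter> spectrum H = R \<inter> spectrum H"
      using False by blast
    ultimately show ?thesis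
      by (simp only: P_def)
  qed
qed

lemma tpoly_roots_poly_spectrum:
  assumes "H\<^sup>H = H"
  shows "tpoly (roots_poly (spectrum H)) H = 0"
proof -
  obtain p where p: "p \<noteq> 0" "tpoly p H = 0"
    using tpoly_annihilator_exists by blast
  define R where "R = {z. poly p z = 0}"
  have R: "finite R"
    using p(1) by (simp add: R_def poly_roots_finite)
  define Q where "Q = (\<Prod>z\<in>R. [:-z, 1:] ^ order z p)"
  have "tscale (lead_coeff p) (tpoly Q H) = tpoly (smult (lead_coeff p) Q) H"
    by (rule tpoly_smult[symmetric])
  also have "\<dots> = 0"
    using p(2) complex_poly_decompose[of p] by (simp add: Q_def R_def)
  finally have "tpoly (\<Prod>z\<in>R. [:-z, 1:] ^ order z p) H \<odot> \<I> = 0"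
    using p(1) by (simp add: Q_def)
  then have "tpoly (roots_poly (R \<inter> spectrum H)) H \<odot> \<I> = 0"
    by (rule tpoly_annihilator_reduce[OF assms R ident_in_tensors])
  moreover have "R \<inter> spectrum H = spectrum H"
    using spectrum_subset_roots[OF p(2)] by (auto simp: R_def)
  ultimately show ?thesis
    by simp
qed

lemma tpoly_eq_on_spectrum:
  assumes "H\<^sup>H = H" "\<And>r. r \<in> spectrum H \<Longrightarrow> poly p r = poly q r"
  shows "tpoly p H = tpoly q H"
proof -
  have "roots_poly (spectrum H) dvd p - q"
    using assms(2) by (intro roots_poly_dvd finite_spectrum) simp
  then obtain k where "p - q = roots_poly (spectrum H) * k"
    by (elim dvdE)
  then have "tpoly p H - tpoly q H = 0"
    using hermitian_in_tensors[OF assms(1)]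
    by (simp add: tpoly_mult tpoly_roots_poly_spectrum[OF assms(1)] flip: tpoly_diff)
  then show ?thesis
    by (simp add: fun_eq_iff minus_apply zero_fun_apply)
qed

text \<open>For Hermitian \<open>H\<close> the choice of the interpolating polynomial does not matter,
  by \<open>tpoly_eq_on_spectrum\<close>.\<close>
definition tfun :: "(complex \<Rightarrow> complex) \<Rightarrow> tensor \<Rightarrow> tensor" where
  "tfun f H = tpoly (SOME p. \<forall>r\<in>spectrum H. poly p r = f r) H"

lemma tfun_eq_tpoly:
  assumes "H\<^sup>H = H" "\<And>r. r \<in> spectrum H \<Longrightarrow> poly p r = f r"
  shows "tfun f H = tpoly p H"
proof -
  have "\<exists>p. \<forall>r\<in>spectrum H. poly p r = f r"
    by (rule poly_interpolation[OF finite_spectrum])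
  then have "\<forall>r\<in>spectrum H. poly (SOME p. \<forall>r\<in>spectrum H. poly p r = f r) r = f r"
    by (rule someI_ex)
  then show ?thesis
    unfolding tfun_def using assms by (intro tpoly_eq_on_spectrum) auto
qed

lemma tfun_in_tensors [simp]: "tfun f H \<in> tens"
  by (simp add: tfun_def)

lemma tfun_mult:
  assumes "H\<^sup>H = H" "\<And>r. r \<in> spectrum H \<Longrightarrow> f r * g r = h r"
  shows "tfun f H \<odot> tfun g H = tfun h H"
proof -
  obtain p q where p: "\<forall>r\<in>spectrum H. poly p r = f r" and q: "\<forall>r\<in>spectrum H. poly q r = g r"
    using poly_interpolation[OF finite_spectrum] by metis
  have "tfun f H = tpoly p H" "tfun g H = tpoly q H"
    using p q by (auto intro: tfun_eq_tpoly[OF assms(1)])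
  then have "tfun f H \<odot> tfun g H = tpoly (p * q) H"
    using assms(1) by (simp add: tpoly_mult hermitian_in_tensors)
  also have "\<dots> = tfun h H"
    using p q assms by (intro tfun_eq_tpoly[symmetric]) auto
  finally show ?thesis .
qed

lemma tfun_ident: "H\<^sup>H = H \<Longrightarrow> tfun (\<lambda>r. r) H = H"
  using tfun_eq_tpoly[of H "[:0, 1:]"] tpoly_X hermitian_in_tensors by simp

lemma tfun_one: "H\<^sup>H = H \<Longrightarrow> tfun (\<lambda>r. 1) H = \<I>"
  using tfun_eq_tpoly[of H 1] by simp

lemma tfun_mult_eq_ident:
  assumes "H\<^sup>H = H" "\<And>r. r \<in> spectrum H \<Longrightarrow> f r * g r = 1"
  shows "tfun f H \<odot> tfun g H = \<I>"
  using tfun_mult[OF assms] tfun_one[OF assms(1)] by simp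

lemma tfun_commute:
  "X \<in> tens \<Longrightarrow> X \<odot> H = H \<odot> X \<Longrightarrow> X \<odot> tfun f H = tfun f H \<odot> X"
  unfolding tfun_def by (rule tpoly_commute)

lemma tfun_hermitian:
  assumes "H\<^sup>H = H" "\<And>r. r \<in> spectrum H \<Longrightarrow> f r \<in> \<real>"
  shows "(tfun f H)\<^sup>H = tfun f H"
proof -
  obtain p where p: "\<forall>r\<in>spectrum H. poly p r = f r"
    using poly_interpolation[OF finite_spectrum] by blast
  have "tfun f H = tpoly p H"
    using p by (auto intro: tfun_eq_tpoly[OF assms(1)])
  moreover have "poly (map_poly cnj p) r = f r" if "r \<in> spectrum H" for r
  proof -
    have "cnj r = r"
      using spectrum_real[OF assms(1) that] by (simp add: complex_eq_iff)
    then have "poly (map_poly cnj p) r = cnj (f r)"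
      using p that poly_cnj[of p r] by simp
    then show ?thesis
      using assms(2)[OF that] by (simp add: Reals_cnj_iff)
  qed
  then have "tfun f H = tpoly (map_poly cnj p) H"
    by (rule tfun_eq_tpoly[OF assms(1)])
  ultimately show ?thesis
    by (simp add: tpoly_ctrans[OF assms(1)])
qed

definition tapply :: "tensor \<Rightarrow> (nat list \<Rightarrow> complex) \<Rightarrow> nat list \<Rightarrow> complex" where
  "tapply Q v = (\<lambda>i. \<Sum>j\<in>idxs. Q i j * v j)"

lemma tapply_einstein:
  assumes "i \<in> idxs"
  shows "tapply (A \<odot> B) v i = tapply A (tapply B v) i"
proof -
  have "tapply (A \<odot> B) v i = (\<Sum>j\<in>idxs. \<Sum>k\<in>idxs. A i k * B k j * v j)"
    unfolding tapply_def using assms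
    by (intro sum.cong refl) (simp add: einstein_apply sum_distrib_right)
  also have "\<dots> = (\<Sum>k\<in>idxs. \<Sum>j\<in>idxs. A i k * B k j * v j)"
    by (rule sum.swap)
  also have "\<dots> = tapply A (tapply B v) i"
    by (simp add: tapply_def sum_distrib_left mult.assoc)
  finally show ?thesis .
qed

lemma tapply_ident: "i \<in> idxs \<Longrightarrow> tapply \<I> v i = v i"
proof -
  assume "i \<in> idxs"
  then have "tapply \<I> v i = (\<Sum>j\<in>idxs. if i = j then v j else 0)"
    unfolding tapply_def by (intro sum.cong) (auto simp: ident_def)
  then show ?thesis
    using \<open>i \<in> idxs\<close> by simp
qed

lemma qform_gram: "qform (Q\<^sup>H \<odot> Q) v = of_real (sqnorm (tapply Q v))"
proof -
  have "qform (Q\<^sup>H \<odot> Q) v = (\<Sum>i\<in>idxs. \<Sum>j\<in>idxs. \<Sum>k\<in>idxs. cnj (Q k i * v i) * (Q k j * v j))"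
    unfolding qform_def
    by (intro sum.cong refl)
      (simp add: einstein_apply ctrans_apply sum_distrib_left sum_distrib_right mult_ac)
  also have "\<dots> = (\<Sum>i\<in>idxs. \<Sum>k\<in>idxs. \<Sum>j\<in>idxs. cnj (Q k i * v i) * (Q k j * v j))"
    by (intro sum.cong refl sum.swap)
  also have "\<dots> = (\<Sum>k\<in>idxs. \<Sum>i\<in>idxs. \<Sum>j\<in>idxs. cnj (Q k i * v i) * (Q k j * v j))"
    by (rule sum.swap)
  also have "\<dots> = (\<Sum>k\<in>idxs. cnj (tapply Q v k) * tapply Q v k)"
    by (simp add: tapply_def cnj_sum sum_product)
  also have "\<dots> = of_real (sqnorm (tapply Q v))"
    by (simp add: sqnorm_def cnj_mult_self)
  finally show ?thesis .
qed

lemma hpd_gram: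
  assumes "Q \<in> tens" "P \<odot> Q = \<I>"
  shows "hpd d (Q\<^sup>H \<odot> Q)"
  unfolding hpd_iff
proof (intro conjI allI impI)
  show "(Q\<^sup>H \<odot> Q)\<^sup>H = Q\<^sup>H \<odot> Q"
    using assms(1) by (simp add: ctrans_einstein)
  fix v :: "nat list \<Rightarrow> complex" assume v: "\<exists>i\<in>idxs. v i \<noteq> 0"
  have "\<exists>i\<in>idxs. tapply Q v i \<noteq> 0"
  proof (rule ccontr)
    assume "\<not> (\<exists>i\<in>idxs. tapply Q v i \<noteq> 0)"
    then have "v i = 0" if "i \<in> idxs" for i
      using that tapply_einstein[OF that, of P Q v] tapply_ident[OF that, of v] assms(2)
      by (simp add: tapply_def)
    then show False
      using v by blast
  qed
  then have "0 < sqnorm (tapply Q v)"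
    by (rule sqnorm_pos)
  then show "Im (qform (Q\<^sup>H \<odot> Q) v) = 0" "0 < Re (qform (Q\<^sup>H \<odot> Q) v)"
    by (simp_all add: qform_gram)
qed

lemma hpd_spectrum:
  assumes "hpd d N" "r \<in> spectrum N"
  shows "\<exists>x>0. r = of_real x"
proof -
  have "Im r = 0"
    by (rule spectrum_real[OF hpd_imp_hermitian[OF assms(1)] assms(2)])
  moreover have "0 < Re r"
    by (rule spectrum_Re_pos[OF hpd_imp_strictly_accretive[OF assms(1)] assms(2)])
  ultimately show ?thesis
    by (intro exI[of _ "Re r"]) (simp add: complex_eq_iff)
qed

section \<open>Square roots of Hermitian positive definite tensors\<close>

lemma tinv_eqI:
  assumes "X \<in> tens" "A \<odot> X = \<I>" "X \<odot> A = \<I>"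
  shows "tinv d A = X"
  unfolding tinv_def
proof (rule the_equality)
  fix Y assume Y: "Y \<in> tens \<and> A \<odot> Y = \<I> \<and> Y \<odot> A = \<I>"
  then have "Y = Y \<odot> (A \<odot> X)"
    using assms(2) by simp
  also have "\<dots> = Y \<odot> A \<odot> X"
    by (simp only: einstein_assoc)
  finally show "Y = X"
    using Y assms(1) by simp
qed (use assms in blast)

lemma hpd_tfun_sqrt:
  assumes "hpd d N"
  shows "hpd d (tfun (\<lambda>r. of_real (sqrt (Re r))) N)"
proof -
  have N: "N\<^sup>H = N"
    using assms by (rule hpd_imp_hermitian)
  \<comment> \<open>the square root is the Gram tensor \<open>Q\<^sup>H \<odot> Q\<close> of the invertible fourth root \<open>Q\<close>\<close>
  define Q where "Q = tfun (\<lambda>r. of_real (sqrt (sqrt (Re r)))) N"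
  have "Q\<^sup>H = Q"
    unfolding Q_def using N by (rule tfun_hermitian) simp
  moreover have "Q \<odot> Q = tfun (\<lambda>r. of_real (sqrt (Re r))) N"
    unfolding Q_def
    by (intro tfun_mult[OF N]) (auto dest!: hpd_spectrum[OF assms] simp flip: of_real_mult)
  moreover have "tfun (\<lambda>r. of_real (inverse (sqrt (sqrt (Re r))))) N \<odot> Q = \<I>"
    unfolding Q_def
    by (intro tfun_mult_eq_ident[OF N]) (auto dest!: hpd_spectrum[OF assms] simp flip: of_real_mult)
  ultimately show ?thesis
    using hpd_gram[of Q] by (simp add: Q_def)
qed

lemma tfun_sqrt_square:
  assumes "hpd d N"
  shows "tfun (\<lambda>r. of_real (sqrt (Re r))) N \<odot> tfun (\<lambda>r. of_real (sqrt (Re r))) N = N"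
proof -
  have N: "N\<^sup>H = N"
    using assms by (rule hpd_imp_hermitian)
  have "tfun (\<lambda>r. of_real (sqrt (Re r))) N \<odot> tfun (\<lambda>r. of_real (sqrt (Re r))) N = tfun (\<lambda>r. r) N"
    by (intro tfun_mult[OF N]) (auto dest!: hpd_spectrum[OF assms] simp flip: of_real_mult)
  then show ?thesis
    by (simp add: tfun_ident[OF N])
qed

lemma hpd_sqrt_unique:
  assumes "hpd d N" "hpd d T" "T \<odot> T = N"
  shows "T = tfun (\<lambda>r. of_real (sqrt (Re r))) N"
proof -
  define S where "S = tfun (\<lambda>r. of_real (sqrt (Re r))) N"
  have T: "T \<in> tens"
    using hpd_imp_hermitian[OF assms(2)] by (rule hermitian_in_tensors)
  \<comment> \<open>\<open>T\<close> commutes with \<open>N = T T\<close>, hence with \<open>S\<close>, and \<open>T + S\<close> is positive definite\<close>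
  have "T \<odot> N = N \<odot> T"
    unfolding assms(3)[symmetric] by (rule einstein_assoc[symmetric])
  then have "T \<odot> S = S \<odot> T"
    unfolding S_def using T by (rule tfun_commute[rotated])
  then have kernel: "(T + S) \<odot> (T - S) = 0"
    using assms(3) tfun_sqrt_square[OF assms(1)]
    by (simp add: S_def einstein_add_left einstein_diff_right)
  have aniso: "anisotropic (T + S)"
    unfolding S_def using assms(1,2)
    by (intro strictly_accretive_imp_anisotropic strictly_accretive_add
      hpd_imp_strictly_accretive hpd_tfun_sqrt)
  have "T - S = 0"
    using T by (intro anisotropic_einstein_eq_0[OF aniso _ kernel]) (simp add: S_def)
  then show ?thesis
    by (simp add: S_def)
qed

lemma tsqrt_eq:
  assumes "hpd d N"
  shows "tsqrt d N = tfun (\<lambda>r. of_real (sqrt (Re r))) N"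
  unfolding tsqrt_def
proof (rule the_equality)
  show "hpd d (tfun (\<lambda>r. of_real (sqrt (Re r))) N) \<and>
      tfun (\<lambda>r. of_real (sqrt (Re r))) N \<odot> tfun (\<lambda>r. of_real (sqrt (Re r))) N = N"
    using hpd_tfun_sqrt[OF assms] tfun_sqrt_square[OF assms] by blast
qed (use hpd_sqrt_unique[OF assms] in blast)

lemma tsqrt_inv_eq:
  assumes "hpd d N"
  shows "tsqrt_inv d N = tfun (\<lambda>r. of_real (inverse (sqrt (Re r)))) N"
  unfolding tsqrt_inv_def tsqrt_eq[OF assms]
  by (intro tinv_eqI tfun_in_tensors tfun_mult_eq_ident[OF hpd_imp_hermitian[OF assms]])
    (auto dest!: hpd_spectrum[OF assms] simp flip: of_real_mult)

lemma tsqrt_square: "hpd d N \<Longrightarrow> tsqrt d N \<odot> tsqrt d N = N"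
  by (simp add: tsqrt_eq tfun_sqrt_square)

lemma hermitian_tsqrt: "hpd d N \<Longrightarrow> (tsqrt d N)\<^sup>H = tsqrt d N"
  by (simp add: tsqrt_eq hpd_tfun_sqrt hpd_imp_hermitian)

lemma hermitian_tsqrt_inv: "hpd d N \<Longrightarrow> (tsqrt_inv d N)\<^sup>H = tsqrt_inv d N"
  by (simp add: tsqrt_inv_eq tfun_hermitian hpd_imp_hermitian)

lemma tsqrt_tsqrt_inv:
  assumes "hpd d N"
  shows "tsqrt d N \<odot> tsqrt_inv d N = \<I>" and "tsqrt_inv d N \<odot> tsqrt d N = \<I>"
  unfolding tsqrt_eq[OF assms] tsqrt_inv_eq[OF assms]
  by (intro tfun_mult_eq_ident[OF hpd_imp_hermitian[OF assms]];
    auto dest!: hpd_spectrum[OF assms] simp flip: of_real_mult)+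

section \<open>Moore-Penrose inverses\<close>

definition penrose :: "tensor \<Rightarrow> tensor \<Rightarrow> bool" where
  "penrose A X \<longleftrightarrow> X \<in> tens \<and> A \<odot> X \<odot> A = A \<and> X \<odot> A \<odot> X = X \<and>
     (A \<odot> X)\<^sup>H = A \<odot> X \<and> (X \<odot> A)\<^sup>H = X \<odot> A"

lemma penrose_unique:
  assumes X: "penrose A X" and Y: "penrose A Y"
  shows "X = Y"
proof -
  have AXA: "A \<odot> (X \<odot> A) = A" and XAX: "X \<odot> (A \<odot> X) = X"
    and AX: "X\<^sup>H \<odot> A\<^sup>H = A \<odot> X" and XA: "A\<^sup>H \<odot> X\<^sup>H = X \<odot> A"
    using X unfolding penrose_def by (auto simp: einstein_assoc ctrans_einstein)
  have AYA: "A \<odot> Y \<odot> A = A" and YAY: "Y \<odot> A \<odot> Y = Y"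
    and AY: "Y\<^sup>H \<odot> A\<^sup>H = A \<odot> Y" and YA: "A\<^sup>H \<odot> Y\<^sup>H = Y \<odot> A"
    using Y unfolding penrose_def by (auto simp: ctrans_einstein)
  have AH_AY: "A\<^sup>H \<odot> (A \<odot> Y) = A\<^sup>H"
    using arg_cong[OF AYA, of "ctrans d"] by (simp only: ctrans_einstein AY)
  have XA_AH: "X \<odot> A \<odot> A\<^sup>H = A\<^sup>H"
    using arg_cong[OF AXA, of "ctrans d"] by (simp only: ctrans_einstein XA)
  have "X = X \<odot> (X\<^sup>H \<odot> A\<^sup>H)"
    by (simp only: AX XAX)
  also have "\<dots> = X \<odot> (X\<^sup>H \<odot> A\<^sup>H \<odot> (A \<odot> Y))"
    by (simp only: einstein_assoc AH_AY)
  also have "\<dots> = X \<odot> (A \<odot> X) \<odot> (A \<odot> Y)"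
    by (simp only: AX einstein_assoc)
  also have "\<dots> = X \<odot> (A \<odot> Y)"
    by (simp only: XAX)
  finally have X_eq: "X = X \<odot> (A \<odot> Y)" .
  have "Y = A\<^sup>H \<odot> Y\<^sup>H \<odot> Y"
    by (simp only: YA YAY)
  also have "\<dots> = X \<odot> A \<odot> (A\<^sup>H \<odot> Y\<^sup>H \<odot> Y)"
    by (simp only: XA_AH flip: einstein_assoc)
  also have "\<dots> = X \<odot> A \<odot> Y"
    by (simp only: YA YAY)
  finally show ?thesis
    using X_eq by (simp add: einstein_assoc)
qed

lemma penrose_sym: "A \<in> tens \<Longrightarrow> penrose A X \<Longrightarrow> penrose X A"
  unfolding penrose_def by auto

lemma mp_eq_penrose:
  assumes "penrose A X"
  shows "mp d A = X"
proof -
  have "mp d A = (THE X. penrose A X)"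
    unfolding mp_def wmp_def penrose_def by simp
  also have "\<dots> = X"
    by (rule the_equality) (use assms penrose_unique in blast)+
  finally show ?thesis .
qed

lemma hermitian_tfun_inverse: "B\<^sup>H = B \<Longrightarrow> (tfun inverse B)\<^sup>H = tfun inverse B"
  using spectrum_real by (intro tfun_hermitian) (auto simp: complex_is_Real_iff)

lemma tfun_inverse_inner:
  assumes "B\<^sup>H = B"
  shows "B \<odot> tfun inverse B \<odot> B = B"
proof -
  have "r * inverse r * r = r" for r :: complex
    by (cases "r = 0") simp_all
  then have "tfun (\<lambda>r. r * inverse r) B \<odot> tfun (\<lambda>r. r) B = tfun (\<lambda>r. r) B"
    by (intro tfun_mult[OF assms])
  moreover have "tfun (\<lambda>r. r) B \<odot> tfun inverse B = tfun (\<lambda>r. r * inverse r) B"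
    by (rule tfun_mult[OF assms]) simp
  ultimately show ?thesis
    by (simp add: tfun_ident[OF assms])
qed

lemma tfun_inverse_outer:
  assumes "B\<^sup>H = B"
  shows "tfun inverse B \<odot> B \<odot> tfun inverse B = tfun inverse B"
proof -
  have "inverse r * r * inverse r = inverse r" for r :: complex
    by (cases "r = 0") simp_all
  then have "tfun (\<lambda>r. inverse r * r) B \<odot> tfun inverse B = tfun inverse B"
    by (intro tfun_mult[OF assms])
  moreover have "tfun inverse B \<odot> tfun (\<lambda>r. r) B = tfun (\<lambda>r. inverse r * r) B"
    by (rule tfun_mult[OF assms]) simp
  ultimately show ?thesis
    by (simp add: tfun_ident[OF assms])
qed

text \<open>Since \<open>inverse 0 = 0\<close>, \<open>tfun inverse B\<close> is the Moore-Penrose inverse of a Hermitian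
  tensor \<open>B\<close>; applied to \<open>B = A\<^sup>H \<odot> A\<close> it yields the one of \<open>A\<close>.\<close>
lemma penrose_tfun:
  assumes A: "A \<in> tens"
  shows "penrose A (tfun inverse (A\<^sup>H \<odot> A) \<odot> A\<^sup>H)"
proof -
  define B where "B = A\<^sup>H \<odot> A"
  define D where "D = tfun inverse B"
  have B: "B\<^sup>H = B"
    using A by (simp add: B_def ctrans_einstein)
  have D: "D\<^sup>H = D"
    unfolding D_def using B by (rule hermitian_tfun_inverse)
  have DB: "D \<odot> B = B \<odot> D"
    unfolding D_def by (rule tfun_commute[OF _ refl, symmetric]) (simp add: B_def)
  have BDB: "B \<odot> D \<odot> B = B" and DBD: "D \<odot> B \<odot> D = D"
    unfolding D_def using tfun_inverse_inner[OF B] tfun_inverse_outer[OF B] by simp_all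
  define Q where "Q = \<I> - D \<odot> B"
  have "B \<odot> Q = 0"
    using BDB A by (simp add: Q_def einstein_diff_right einstein_assoc B_def)
  then have "(A \<odot> Q)\<^sup>H \<odot> (A \<odot> Q) = 0"
    by (simp add: ctrans_einstein einstein_assoc B_def)
  then have "A \<odot> Q = 0"
    by (rule ctrans_einstein_self_eq_0[OF einstein_in_tensors])
  then have ADB: "A \<odot> (D \<odot> B) = A"
    using A by (simp add: Q_def einstein_diff_right)
  show ?thesis
    unfolding penrose_def B_def[symmetric] D_def[symmetric]
  proof (intro conjI)
    show "A \<odot> (D \<odot> A\<^sup>H) \<odot> A = A"
      using ADB by (simp add: B_def einstein_assoc)
    show "D \<odot> A\<^sup>H \<odot> A \<odot> (D \<odot> A\<^sup>H) = D \<odot> A\<^sup>H"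
      using DBD by (simp add: B_def flip: einstein_assoc)
    show "(A \<odot> (D \<odot> A\<^sup>H))\<^sup>H = A \<odot> (D \<odot> A\<^sup>H)"
      using A D by (simp add: ctrans_einstein einstein_assoc)
    show "(D \<odot> A\<^sup>H \<odot> A)\<^sup>H = D \<odot> A\<^sup>H \<odot> A"
      using B D DB by (simp add: einstein_assoc ctrans_einstein flip: B_def)
  qed simp
qed

lemma mp_eq_tfun: "A \<in> tens \<Longrightarrow> mp d A = tfun inverse (A\<^sup>H \<odot> A) \<odot> A\<^sup>H"
  by (rule mp_eq_penrose[OF penrose_tfun])

lemma penrose_mp: "A \<in> tens \<Longrightarrow> penrose A (mp d A)"
  by (simp add: mp_eq_tfun penrose_tfun)

lemma mp_mp: "A \<in> tens \<Longrightarrow> mp d (mp d A) = A"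
  by (rule mp_eq_penrose[OF penrose_sym[OF _ penrose_mp]]) (simp_all add: mp_eq_tfun)

lemma normal_imp_normal_mp:
  assumes A: "A \<in> tens" and normal: "A \<odot> A\<^sup>H = A\<^sup>H \<odot> A"
  shows "mp d A \<odot> (mp d A)\<^sup>H = (mp d A)\<^sup>H \<odot> mp d A"
proof -
  define B where "B = A\<^sup>H \<odot> A"
  define D where "D = tfun inverse B"
  have B: "B\<^sup>H = B"
    using A by (simp add: B_def ctrans_einstein)
  have D: "D\<^sup>H = D"
    unfolding D_def using B by (rule hermitian_tfun_inverse)
  have "A \<odot> B = B \<odot> A"
    unfolding B_def using normal by (simp flip: einstein_assoc)
  have "A\<^sup>H \<odot> B = A\<^sup>H \<odot> (A \<odot> A\<^sup>H)"
    by (simp add: B_def normal)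
  also have "\<dots> = B \<odot> A\<^sup>H"
    by (simp add: B_def einstein_assoc)
  finally have "A\<^sup>H \<odot> B = B \<odot> A\<^sup>H" .
  with \<open>A \<odot> B = B \<odot> A\<close> have DA: "A \<odot> D = D \<odot> A" and DAH: "A\<^sup>H \<odot> D = D \<odot> A\<^sup>H"
    unfolding D_def using A by (simp_all add: tfun_commute)
  have DBD: "D \<odot> B \<odot> D = D"
    unfolding D_def using tfun_inverse_outer[OF B] .
  have mp: "mp d A = D \<odot> A\<^sup>H" and mpH: "(D \<odot> A\<^sup>H)\<^sup>H = A \<odot> D"
    using A D by (simp_all add: mp_eq_tfun B_def D_def ctrans_einstein)
  have "mp d A \<odot> (mp d A)\<^sup>H = D \<odot> B \<odot> D"
    by (simp only: mp mpH B_def einstein_assoc)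
  moreover have "(mp d A)\<^sup>H \<odot> mp d A = A \<odot> D \<odot> (D \<odot> A\<^sup>H)"
    by (simp only: mp mpH)
  moreover have "\<dots> = D \<odot> (A \<odot> A\<^sup>H) \<odot> D"
    by (simp only: DA DAH[symmetric] einstein_assoc)
  ultimately show ?thesis
    by (simp only: B_def normal)
qed

lemma normal_iff_normal_mp:
  assumes "A \<in> tens"
  shows "A \<odot> A\<^sup>H = A\<^sup>H \<odot> A \<longleftrightarrow> mp d A \<odot> (mp d A)\<^sup>H = (mp d A)\<^sup>H \<odot> mp d A"
  using normal_imp_normal_mp[OF assms] normal_imp_normal_mp[of "mp d A"] mp_mp[OF assms]
  by (auto simp: mp_eq_tfun assms)

section \<open>Conjugation by the square root of the weight\<close>

lemma einstein_sandwich_eq_iff: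
  assumes "P' \<odot> P = \<I>" "Q \<odot> Q' = \<I>" "Y \<in> tens" "Z \<in> tens"
  shows "P \<odot> Y \<odot> Q = P \<odot> Z \<odot> Q \<longleftrightarrow> Y = Z"
proof
  have cancel: "P' \<odot> (P \<odot> W \<odot> Q) \<odot> Q' = W" if "W \<in> tens" for W
  proof -
    have "P' \<odot> (P \<odot> W \<odot> Q) \<odot> Q' = P' \<odot> P \<odot> W \<odot> (Q \<odot> Q')"
      by (simp only: einstein_assoc)
    then show ?thesis
      using assms(1,2) that by simp
  qed
  show "P \<odot> Y \<odot> Q = P \<odot> Z \<odot> Q \<Longrightarrow> Y = Z"
    using cancel[OF assms(3)] cancel[OF assms(4)] by metis
qed simp

context
  fixes S Si N :: tensor
  assumes S_Si [simp]: "S \<odot> Si = \<I>" and Si_S [simp]: "Si \<odot> S = \<I>"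
    and S_herm: "S\<^sup>H = S" and Si_herm: "Si\<^sup>H = Si" and N_eq: "N = S \<odot> S"
begin

lemma S_in_tensors [simp]: "S \<in> tens" and Si_in_tensors [simp]: "Si \<in> tens"
  using hermitian_in_tensors S_herm Si_herm by blast+

lemma S_Si_cancel [simp]: "X \<in> tens \<Longrightarrow> S \<odot> (Si \<odot> X) = X"
  and Si_S_cancel [simp]: "X \<in> tens \<Longrightarrow> Si \<odot> (S \<odot> X) = X"
  by (simp_all flip: einstein_assoc)

lemma conj_einstein: "Z \<in> tens \<Longrightarrow> S \<odot> Y \<odot> Si \<odot> (S \<odot> Z \<odot> Si) = S \<odot> (Y \<odot> Z) \<odot> Si"
  by (simp add: einstein_assoc)

lemma conj_eq_iff: "Y \<in> tens \<Longrightarrow> Z \<in> tens \<Longrightarrow> S \<odot> Y \<odot> Si = S \<odot> Z \<odot> Si \<longleftrightarrow> Y = Z"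
  by (rule einstein_sandwich_eq_iff[OF Si_S Si_S])

lemma wctrans_conj: "wctrans d N (Si \<odot> Y \<odot> S) = Si \<odot> Y\<^sup>H \<odot> S"
proof -
  have "tinv d N = Si \<odot> Si"
    by (rule tinv_eqI) (simp_all add: N_eq einstein_assoc)
  then show ?thesis
    by (simp add: wctrans_def N_eq ctrans_einstein S_herm Si_herm einstein_assoc)
qed

lemma weighted_hermitian_iff:
  assumes "V \<in> tens"
  shows "(N \<odot> V)\<^sup>H = N \<odot> V \<longleftrightarrow> (S \<odot> V \<odot> Si)\<^sup>H = S \<odot> V \<odot> Si"
proof -
  have "(N \<odot> V)\<^sup>H = N \<odot> V \<longleftrightarrow> Si \<odot> (N \<odot> V)\<^sup>H \<odot> Si = Si \<odot> (N \<odot> V) \<odot> Si"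
    by (rule einstein_sandwich_eq_iff[OF S_Si Si_S, symmetric]) (simp_all add: N_eq)
  then show ?thesis
    using assms by (simp add: N_eq ctrans_einstein S_herm Si_herm einstein_assoc)
qed

lemma weighted_penrose_iff:
  assumes A: "A \<in> tens" and X: "X \<in> tens"
  shows "(X \<in> tens \<and> A \<odot> X \<odot> A = A \<and> X \<odot> A \<odot> X = X \<and>
      (N \<odot> (A \<odot> X))\<^sup>H = N \<odot> (A \<odot> X) \<and> (N \<odot> (X \<odot> A))\<^sup>H = N \<odot> (X \<odot> A))
    \<longleftrightarrow> penrose (S \<odot> A \<odot> Si) (S \<odot> X \<odot> Si)"
  unfolding penrose_def
  using A X by (simp add: conj_einstein conj_eq_iff weighted_hermitian_iff)

lemma wmp_conj:
  assumes A: "A \<in> tens"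
  shows "wmp d N N A = Si \<odot> mp d (S \<odot> A \<odot> Si) \<odot> S"
  unfolding wmp_def
proof (rule the_equality)
  define Z where "Z = mp d (S \<odot> A \<odot> Si)"
  have Z: "penrose (S \<odot> A \<odot> Si) Z"
    unfolding Z_def by (rule penrose_mp) simp
  then have "penrose (S \<odot> A \<odot> Si) (S \<odot> (Si \<odot> Z \<odot> S) \<odot> Si)"
    by (simp add: penrose_def einstein_assoc)
  then show "Si \<odot> Z \<odot> S \<in> tens \<and> A \<odot> (Si \<odot> Z \<odot> S) \<odot> A = A \<and>
      Si \<odot> Z \<odot> S \<odot> A \<odot> (Si \<odot> Z \<odot> S) = Si \<odot> Z \<odot> S \<and>
      (N \<odot> (A \<odot> (Si \<odot> Z \<odot> S)))\<^sup>H = N \<odot> (A \<odot> (Si \<odot> Z \<odot> S)) \<and>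
      (N \<odot> (Si \<odot> Z \<odot> S \<odot> A))\<^sup>H = N \<odot> (Si \<odot> Z \<odot> S \<odot> A)"
    by (simp only: weighted_penrose_iff[OF A einstein_in_tensors])
  fix X assume "X \<in> tens \<and> A \<odot> X \<odot> A = A \<and> X \<odot> A \<odot> X = X \<and>
      (N \<odot> (A \<odot> X))\<^sup>H = N \<odot> (A \<odot> X) \<and> (N \<odot> (X \<odot> A))\<^sup>H = N \<odot> (X \<odot> A)"
  then have "X \<in> tens" and "penrose (S \<odot> A \<odot> Si) (S \<odot> X \<odot> Si)"
    using weighted_penrose_iff[OF A] by blast+
  then show "X = Si \<odot> Z \<odot> S"
    using penrose_unique[OF _ Z] by (simp add: einstein_assoc)
qed

lemma weighted_hermitian_conj_iff:
  "Y \<in> tens \<Longrightarrow> Si \<odot> Y \<odot> S = wctrans d N (Si \<odot> Y \<odot> S) \<longleftrightarrow> Y = Y\<^sup>H"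
  unfolding wctrans_conj by (rule einstein_sandwich_eq_iff[OF S_Si S_Si]) simp_all

lemma weighted_normal_conj_iff:
  assumes "Y \<in> tens"
  shows "Si \<odot> Y \<odot> S \<odot> wctrans d N (Si \<odot> Y \<odot> S) = wctrans d N (Si \<odot> Y \<odot> S) \<odot> (Si \<odot> Y \<odot> S)
    \<longleftrightarrow> Y \<odot> Y\<^sup>H = Y\<^sup>H \<odot> Y"
proof -
  have "Si \<odot> Y \<odot> S \<odot> (Si \<odot> Y\<^sup>H \<odot> S) = Si \<odot> (Y \<odot> Y\<^sup>H) \<odot> S"
    and "Si \<odot> Y\<^sup>H \<odot> S \<odot> (Si \<odot> Y \<odot> S) = Si \<odot> (Y\<^sup>H \<odot> Y) \<odot> S"
    using assms by (simp_all add: einstein_assoc)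
  then show ?thesis
    unfolding wctrans_conj by (simp add: einstein_sandwich_eq_iff[OF S_Si S_Si])
qed

end

end

theorem theorem4p4:
  fixes dims :: "nat list" and A N :: tensor
  assumes "A \<in> tensors dims" and "hpd dims N"
  defines "At \<equiv> einstein dims (einstein dims (tsqrt dims N) A) (tsqrt_inv dims N)"
  shows "(A = wctrans dims N A \<longleftrightarrow> At = ctrans dims At)
    \<and> (einstein dims A (wctrans dims N A) = einstein dims (wctrans dims N A) A
         \<longleftrightarrow> einstein dims At (ctrans dims At) = einstein dims (ctrans dims At) At)
    \<and> (einstein dims (wmp dims N N A) (wctrans dims N (wmp dims N N A))
           = einstein dims (wctrans dims N (wmp dims N N A)) (wmp dims N N A)
         \<longleftrightarrow> einstein dims (mp dims At) (ctrans dims (mp dims At))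
           = einstein dims (ctrans dims (mp dims At)) (mp dims At))
    \<and> (einstein dims A (wctrans dims N A) = einstein dims (wctrans dims N A) A
         \<longleftrightarrow> einstein dims (wmp dims N N A) (wctrans dims N (wmp dims N N A))
           = einstein dims (wctrans dims N (wmp dims N N A)) (wmp dims N N A))"
proof -
  note sqrt_pair = tsqrt_tsqrt_inv[OF assms(2)] hermitian_tsqrt[OF assms(2)]
    hermitian_tsqrt_inv[OF assms(2)] tsqrt_square[OF assms(2), symmetric]
  have At: "At \<in> tensors dims"
    by (simp add: At_def)
  have A_eq: "A = einstein dims (einstein dims (tsqrt_inv dims N) At) (tsqrt dims N)"
    using assms(1) by (simp add: At_def einstein_assoc Si_S_cancel[OF sqrt_pair] sqrt_pair(2))
  have wmp_eq:
    "wmp dims N N A = einstein dims (einstein dims (tsqrt_inv dims N) (mp dims At)) (tsqrt dims N)"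
    unfolding At_def by (rule wmp_conj[OF sqrt_pair assms(1)])
  have "A = wctrans dims N A \<longleftrightarrow> At = ctrans dims At"
    by (subst (1 2) A_eq) (rule weighted_hermitian_conj_iff[OF sqrt_pair At])
  moreover have "einstein dims A (wctrans dims N A) = einstein dims (wctrans dims N A) A
      \<longleftrightarrow> einstein dims At (ctrans dims At) = einstein dims (ctrans dims At) At"
    by (subst (1 2 3 4) A_eq) (rule weighted_normal_conj_iff[OF sqrt_pair At])
  moreover have "einstein dims (wmp dims N N A) (wctrans dims N (wmp dims N N A))
        = einstein dims (wctrans dims N (wmp dims N N A)) (wmp dims N N A)
      \<longleftrightarrow> einstein dims (mp dims At) (ctrans dims (mp dims At))
        = einstein dims (ctrans dims (mp dims At)) (mp dims At)"
    unfolding wmp_eq by (rule weighted_normal_conj_iff[OF sqrt_pair]) (simp add: mp_eq_tfun At)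
  ultimately show ?thesis
    using normal_iff_normal_mp[OF At] by blast
qed

end
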